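(* Fix $\mathbf{k}\neq 0$, $t\ge0$, $n\ge1$, and let $g$ be a function of $z$ analytic near the segment $[-i,i]$ of the imaginary axis. Let $\theta_j=\frac{j\pi}{n+1}$, $z_j=i\cos\theta_j$, $\alpha_j=\frac{\sin^2\theta_j}{n+1}$ and $\Delta\theta=\frac{\pi}{2(n+1)}$. Then $$\left|2|\mathbf{k}|\int_{-i}^{i}\sqrt{1+z^2}e^{zt}g(z)\,dz-2\pi i|\mathbf{k}|\sum_{j=1}^n g(z_j)e^{z_jt}\alpha_j\right|\le\frac23|\mathbf{k}|\Delta\theta^3\Big(3\max_{z\in[i\cos\Delta\theta,\,i]}|g(z)|+3\max_{z\in[-i,\,-i\cos\Delta\theta]}|g(z)|+\sum_{j=1}^n\max_{z\in I_j}|E(z)|\Big),$$ where $I_j$ is the segment of the imaginary axis between $i\cos(\theta_j-\Delta\theta)$ and $i\cos(\theta_j+\Delta\theta)$, and $$E(z)=e^{zt}\Big[(z^4+2z^2+1)\big(g''(z)+2t\,g'(z)+t^2g(z)\big)+5(z^3+z)\big(g'(z)+t\,g(z)\big)+(4z^2+2)g(z)\Big].$$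
   Context: The integral is along the segment of the imaginary axis from $-i$ to $i$. In the paper $g$ is given by $|\mathbf{k}|\,g(s/|\mathbf{k}|)=\hat U(x,\mathbf{k},s)$, where $\hat U$ is the Laplace–Fourier transform of a solution of the wave equation, and derivatives are with respect to $z=s/|\mathbf{k}|$. *)

theory Defs
  imports "HOL-Complex_Analysis.Complex_Analysis"
begin

definition wave_E :: "(complex \<Rightarrow> complex) \<Rightarrow> real \<Rightarrow> complex \<Rightarrow> complex" where
  "wave_E g t z = exp (z * of_real t) *
     ((z^4 + 2*z^2 + 1) * (deriv (deriv g) z + 2 * of_real t * deriv g z + (of_real t)^2 * g z)
      + 5 * (z^3 + z) * (deriv g z + of_real t * g z)
      + (4 * z^2 + 2) * g z)"

end

theory Submission
  imports Defs
begin

text \<open>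
  Substituting \<open>z = \<i> cos \<theta>\<close> maps \<open>[0, \<pi>]\<close> onto the segment from \<open>\<i>\<close> to \<open>-\<i>\<close> and turns
  \<open>\<surd>(1 + z\<^sup>2) dz\<close> into \<open>-\<i> sin\<^sup>2 \<theta> d\<theta>\<close>. So the integral is \<open>\<i>\<close> times the integral over
  \<open>[0, \<pi>]\<close> of \<open>\<phi>(\<theta>) = sin\<^sup>2 \<theta> exp(\<i> t cos \<theta>) g(\<i> cos \<theta>)\<close>, while \<open>\<pi> \<Sum>\<^sub>j g(z\<^sub>j) e\<^bsup>z\<^sub>j t\<^esup> \<alpha>\<^sub>j = 2\<Delta>\<theta> \<Sum>\<^sub>j \<phi>(\<theta>\<^sub>j)\<close>
  is the midpoint rule on the cells \<open>[\<theta>\<^sub>j - \<Delta>\<theta>, \<theta>\<^sub>j + \<Delta>\<theta>]\<close>, which cover \<open>[0, \<pi>]\<close> up to two end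
  pieces of length \<open>\<Delta>\<theta>\<close>. On a cell the midpoint error is at most \<open>\<Delta>\<theta>\<^sup>3/3 max |\<phi>''|\<close>, and the
  chain rule gives \<open>\<phi>''(\<theta>) = -E(\<i> cos \<theta>)\<close>. On the end pieces \<open>|\<phi>(\<theta>)| \<le> \<theta>\<^sup>2 max |g|\<close>
  (resp. \<open>(\<pi> - \<theta>)\<^sup>2 max |g|\<close>), because \<open>sin \<theta> \<le> \<theta>\<close> and the exponential has modulus 1 on the
  imaginary axis.
\<close>

lemma has_integral_power2_shifted:
  fixes a b p :: real
  assumes "a \<le> b"
  shows "((\<lambda>x. (x - p)^2) has_integral ((b - p)^3 - (a - p)^3) / 3) {a..b}"
proof -
  have "((\<lambda>x. (x - p)^2) has_integral (\<lambda>x. (x - p)^3/3) b - (\<lambda>x. (x - p)^3/3) a) {a..b}"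
  proof (rule fundamental_theorem_of_calculus[OF assms])
    fix x
    show "((\<lambda>x. (x - p)^3/3) has_vector_derivative (x - p)^2) (at x within {a..b})"
      unfolding has_real_derivative_iff_has_vector_derivative[symmetric]
      by (auto intro!: derivative_eq_intros simp: power2_eq_square)
  qed
  then show ?thesis by (simp add: diff_divide_distrib)
qed

lemma norm_integral_le_quadratic_weight:
  fixes f :: "real \<Rightarrow> 'a::banach"
  assumes "f integrable_on {a..b}" "a \<le> b"
    and "\<And>x. x \<in> {a..b} \<Longrightarrow> norm (f x) \<le> M * (x - p)^2"
  shows "norm (integral {a..b} f) \<le> M * ((b - p)^3 - (a - p)^3) / 3"
proof -
  have w: "((\<lambda>x. M * (x - p)^2) has_integral M * (((b - p)^3 - (a - p)^3) / 3)) {a..b}"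
    using has_integral_mult_right[OF has_integral_power2_shifted[OF assms(2)]] .
  have "norm (integral {a..b} f) \<le> integral {a..b} (\<lambda>x. M * (x - p)^2)"
    using assms(1,3) w by (intro integral_norm_bound_integral) auto
  then show ?thesis unfolding integral_unique[OF w] by simp
qed

lemma norm_integral_by_parts_twice_le:
  fixes f :: "real \<Rightarrow> 'a::banach"
  assumes "a \<le> b"
    and f': "\<And>x. x \<in> {a..b} \<Longrightarrow> (f has_vector_derivative f' x) (at x within {a..b})"
    and f'': "\<And>x. x \<in> {a..b} \<Longrightarrow> (f' has_vector_derivative f'' x) (at x within {a..b})"
    and M: "\<And>x. x \<in> {a..b} \<Longrightarrow> norm (f'' x) \<le> M"
  shows "norm (integral {a..b} f + (((b - p)^2/2) *\<^sub>R f' b - (b - p) *\<^sub>R f b)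
                                 - (((a - p)^2/2) *\<^sub>R f' a - (a - p) *\<^sub>R f a))
           \<le> M * ((b - p)^3 - (a - p)^3) / 6"
proof -
  define B where "B x = ((x - p)^2/2) *\<^sub>R f' x - (x - p) *\<^sub>R f x" for x
  have by_parts: "((\<lambda>x. ((x - p)^2/2) *\<^sub>R f'' x - f x) has_integral B b - B a) {a..b}"
    unfolding B_def
  proof (rule fundamental_theorem_of_calculus[OF assms(1)])
    fix x assume x: "x \<in> {a..b}"
    have "((\<lambda>x. (x - p)^2/2) has_real_derivative x - p) (at x within {a..b})"
      by (auto intro!: derivative_eq_intros)
    moreover have "((\<lambda>x. x - p) has_real_derivative 1) (at x within {a..b})"
      by (auto intro!: derivative_eq_intros)
    ultimately have "((\<lambda>x. ((x - p)^2/2) *\<^sub>R f' x - (x - p) *\<^sub>R f x) has_vector_derivative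
            (((x - p)^2/2) *\<^sub>R f'' x + (x - p) *\<^sub>R f' x) - ((x - p) *\<^sub>R f' x + 1 *\<^sub>R f x))
          (at x within {a..b})"
      by (intro has_vector_derivative_diff has_vector_derivative_scaleR f'[OF x] f''[OF x])
    then show "((\<lambda>x. ((x - p)^2/2) *\<^sub>R f' x - (x - p) *\<^sub>R f x) has_vector_derivative
            ((x - p)^2/2) *\<^sub>R f'' x - f x) (at x within {a..b})"
      by simp
  qed
  have "f integrable_on {a..b}"
    using continuous_on_vector_derivative[OF f'] by (rule integrable_continuous_interval)
  from has_integral_add[OF by_parts integrable_integral[OF this]]
  have kernel: "((\<lambda>x. ((x - p)^2/2) *\<^sub>R f'' x) has_integral
                              (B b - B a) + integral {a..b} f) {a..b}"
    by simp
  have bound: "norm (integral {a..b} (\<lambda>x. ((x - p)^2/2) *\<^sub>R f'' x)) \<le> M/2 * ((b - p)^3 - (a - p)^3) / 3"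
  proof (rule norm_integral_le_quadratic_weight[OF has_integral_integrable[OF kernel] assms(1)])
    fix x assume "x \<in> {a..b}"
    then show "norm (((x - p)^2/2) *\<^sub>R f'' x) \<le> M/2 * (x - p)^2"
      using M mult_left_mono[of "norm (f'' x)" M "(x - p)^2/2"] by (simp add: mult.commute)
  qed
  have "integral {a..b} f + (((b - p)^2/2) *\<^sub>R f' b - (b - p) *\<^sub>R f b)
          - (((a - p)^2/2) *\<^sub>R f' a - (a - p) *\<^sub>R f a)
        = integral {a..b} (\<lambda>x. ((x - p)^2/2) *\<^sub>R f'' x)"
    unfolding integral_unique[OF kernel] B_def by simp
  then show ?thesis
    using bound by simp
qed

lemma midpoint_rule_error:
  fixes f :: "real \<Rightarrow> 'a::banach"
  assumes "0 \<le> d"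
    and f': "\<And>x. x \<in> {c-d..c+d} \<Longrightarrow> (f has_vector_derivative f' x) (at x within {c-d..c+d})"
    and f'': "\<And>x. x \<in> {c-d..c+d} \<Longrightarrow> (f' has_vector_derivative f'' x) (at x within {c-d..c+d})"
    and M: "\<And>x. x \<in> {c-d..c+d} \<Longrightarrow> norm (f'' x) \<le> M"
  shows "norm (integral {c-d..c+d} f - (2*d) *\<^sub>R f c) \<le> M * d^3/3"
proof -
  \<comment> \<open>Base points at the outer endpoints make the \<open>f'\<close> boundary terms of the two halves cancel.\<close>
  have halves: "{c-d..c} \<subseteq> {c-d..c+d}" "{c..c+d} \<subseteq> {c-d..c+d}"
    by auto
  have "norm (integral {c-d..c} f + (((c - (c-d))^2/2) *\<^sub>R f' c - (c - (c-d)) *\<^sub>R f c)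
               - (((c-d - (c-d))^2/2) *\<^sub>R f' (c-d) - (c-d - (c-d)) *\<^sub>R f (c-d)))
        \<le> M * ((c - (c-d))^3 - (c-d - (c-d))^3) / 6"
    using assms(1) halves(1) subsetD[OF halves(1)]
    by (intro norm_integral_by_parts_twice_le[where f''=f''])
       (auto intro: has_vector_derivative_within_subset[OF f' halves(1)]
         has_vector_derivative_within_subset[OF f'' halves(1)] M)
  then have left: "norm (integral {c-d..c} f + ((d^2/2) *\<^sub>R f' c - d *\<^sub>R f c)) \<le> M * d^3/6"
    by simp
  have "norm (integral {c..c+d} f + (((c+d - (c+d))^2/2) *\<^sub>R f' (c+d) - (c+d - (c+d)) *\<^sub>R f (c+d))
               - (((c - (c+d))^2/2) *\<^sub>R f' c - (c - (c+d)) *\<^sub>R f c))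
        \<le> M * ((c+d - (c+d))^3 - (c - (c+d))^3) / 6"
    using assms(1) halves(2) subsetD[OF halves(2)]
    by (intro norm_integral_by_parts_twice_le[where f''=f''])
       (auto intro: has_vector_derivative_within_subset[OF f' halves(2)]
         has_vector_derivative_within_subset[OF f'' halves(2)] M)
  then have right: "norm (integral {c..c+d} f - ((d^2/2) *\<^sub>R f' c + d *\<^sub>R f c)) \<le> M * d^3/6"
    by simp
  have "f integrable_on {c-d..c+d}"
    using continuous_on_vector_derivative[OF f'] by (rule integrable_continuous_interval)
  then have "integral {c-d..c} f + integral {c..c+d} f = integral {c-d..c+d} f"
    using assms(1) by (intro Henstock_Kurzweil_Integration.integral_combine) auto
  then have "integral {c-d..c+d} f - (2*d) *\<^sub>R f c
      = (integral {c-d..c} f + ((d^2/2) *\<^sub>R f' c - d *\<^sub>R f c))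
        + (integral {c..c+d} f - ((d^2/2) *\<^sub>R f' c + d *\<^sub>R f c))"
    by (simp add: algebra_simps scaleR_2 flip: scaleR_scaleR)
  then show ?thesis
    using norm_triangle_le[OF add_mono[OF left right]] by simp
qed

lemma integral_split_midpoint_cells:
  fixes f :: "real \<Rightarrow> 'a::banach"
  assumes "0 \<le> d" "f integrable_on {0..(2*real m + 1)*d}"
  shows "integral {0..(2*real m + 1)*d} f
           = integral {0..d} f + (\<Sum>j=1..m. integral {2*real j*d - d..2*real j*d + d} f)"
  using assms(2)
proof (induction m)
  case (Suc m)
  have le: "(2*real m + 1)*d \<le> (2*real (Suc m) + 1)*d"
    using assms(1) by (intro mult_right_mono) auto
  have "f integrable_on {0..(2*real m + 1)*d}"
    by (rule integrable_on_subinterval[OF Suc.prems]) (use le in auto)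
  have "integral {0..(2*real (Suc m) + 1)*d} f
      = integral {0..(2*real m + 1)*d} f + integral {(2*real m + 1)*d..(2*real (Suc m) + 1)*d} f"
    by (rule Henstock_Kurzweil_Integration.integral_combine[OF _ le Suc.prems, symmetric])
       (simp add: assms(1))
  also have "{(2*real m + 1)*d..(2*real (Suc m) + 1)*d} = {2*real (Suc m)*d - d..2*real (Suc m)*d + d}"
    by (simp add: algebra_simps)
  finally show ?case
    using Suc.IH[OF \<open>f integrable_on {0..(2*real m + 1)*d}\<close>] by (simp add: add.assoc)
qed simp

lemma composite_midpoint_rule_error:
  fixes f :: "real \<Rightarrow> 'a::banach" and n :: nat
  assumes "0 \<le> d" and L: "L = (2*real n + 2) * d"
    and f': "\<And>x. (f has_vector_derivative f' x) (at x)"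
    and f'': "\<And>x. (f' has_vector_derivative f'' x) (at x)"
    and left: "\<And>x. x \<in> {0..d} \<Longrightarrow> norm (f x) \<le> A * x^2"
    and right: "\<And>x. x \<in> {L-d..L} \<Longrightarrow> norm (f x) \<le> B * (L - x)^2"
    and cell: "\<And>j x. j \<in> {1..n} \<Longrightarrow> x \<in> {2*real j*d - d..2*real j*d + d} \<Longrightarrow> norm (f'' x) \<le> M j"
  shows "norm (integral {0..L} f - (\<Sum>j=1..n. (2*d) *\<^sub>R f (2*real j*d)))
           \<le> d^3/3 * (A + B + (\<Sum>j=1..n. M j))"
proof -
  define C where "C j = integral {2*real j*d - d..2*real j*d + d} f" for j
  have cont: "continuous_on S f" for S
    using f' by (meson continuous_on_vector_derivative has_vector_derivative_at_within)
  have "integral {0..(2*real n + 1)*d} f + integral {(2*real n + 1)*d..L} f = integral {0..L} f"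
    using assms(1) L
    by (intro Henstock_Kurzweil_Integration.integral_combine integrable_continuous_interval cont)
       (auto intro: mult_right_mono)
  moreover have "(2*real n + 1)*d = L - d"
    using L by (simp add: algebra_simps)
  ultimately have "integral {0..L} f = integral {0..d} f + (\<Sum>j=1..n. C j) + integral {L-d..L} f"
    using integral_split_midpoint_cells[OF assms(1) integrable_continuous_interval[OF cont], of n]
    by (simp add: C_def)
  then have eq: "integral {0..L} f - (\<Sum>j=1..n. (2*d) *\<^sub>R f (2*real j*d))
      = integral {0..d} f + integral {L-d..L} f + (\<Sum>j=1..n. C j - (2*d) *\<^sub>R f (2*real j*d))"
    by (simp add: sum_subtractf)
  have "norm (integral {0..L} f - (\<Sum>j=1..n. (2*d) *\<^sub>R f (2*real j*d)))
      \<le> norm (integral {0..d} f) + norm (integral {L-d..L} f)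
         + (\<Sum>j=1..n. norm (C j - (2*d) *\<^sub>R f (2*real j*d)))"
    unfolding eq by (rule order_trans[OF norm_triangle_ineq] add_mono norm_triangle_ineq norm_sum order_refl)+
  also have "\<dots> \<le> A * d^3/3 + B * d^3/3 + (\<Sum>j=1..n. M j * d^3/3)"
  proof (intro add_mono sum_mono)
    show "norm (integral {0..d} f) \<le> A * d^3/3"
      using norm_integral_le_quadratic_weight[of f 0 d A 0] assms(1) left
      by (simp add: integrable_continuous_interval cont)
    show "norm (integral {L-d..L} f) \<le> B * d^3/3"
      using norm_integral_le_quadratic_weight[of f "L-d" L B L] assms(1) right
      by (simp add: integrable_continuous_interval cont power2_commute)
    fix j assume "j \<in> {1..n}"
    then show "norm (C j - (2*d) *\<^sub>R f (2*real j*d)) \<le> M j * d^3/3"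
      unfolding C_def
      using midpoint_rule_error[OF assms(1) has_vector_derivative_at_within[OF f']
          has_vector_derivative_at_within[OF f''] cell] by blast
  qed
  also have "\<dots> = d^3/3 * (A + B + (\<Sum>j=1..n. M j))"
    by (simp add: sum_distrib_left sum_divide_distrib algebra_simps)
  finally show ?thesis .
qed

definition icos_pullback :: "(complex \<Rightarrow> complex) \<Rightarrow> real \<Rightarrow> complex" where
  "icos_pullback G \<theta> = of_real ((sin \<theta>)^2) * G (\<i> * of_real (cos \<theta>))"

lemma has_vector_derivative_comp_icos:
  assumes "(H has_field_derivative H' (\<i> * of_real (cos x))) (at (\<i> * of_real (cos x)))"
  shows "((\<lambda>\<theta>. H (\<i> * of_real (cos \<theta>))) has_vector_derivative
           - \<i> * of_real (sin x) * H' (\<i> * of_real (cos x))) (at x)"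
proof -
  have "((\<lambda>\<theta>. \<i> * of_real (cos \<theta>)) has_vector_derivative \<i> * of_real (- sin x)) (at x)"
    by (auto intro!: derivative_eq_intros)
  from field_vector_diff_chain_at[OF this assms] show ?thesis
    by (simp add: o_def)
qed

lemma has_vector_derivative_icos_pullback:
  assumes "\<And>x. (G has_field_derivative G' (\<i> * of_real (cos x))) (at (\<i> * of_real (cos x)))"
  shows "(icos_pullback G has_vector_derivative
           of_real (2 * sin x * cos x) * G (\<i> * of_real (cos x))
           - \<i> * of_real ((sin x)^3) * G' (\<i> * of_real (cos x))) (at x)"
proof -
  have "((\<lambda>\<theta>. of_real ((sin \<theta>)^2) :: complex) has_vector_derivative of_real (2 * sin x * cos x)) (at x)"
    by (rule has_vector_derivative_of_real) (auto intro!: derivative_eq_intros)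
  from has_vector_derivative_mult[OF this has_vector_derivative_comp_icos[of G G' x, OF assms]]
  show ?thesis
    unfolding icos_pullback_def by (simp add: algebra_simps power3_eq_cube power2_eq_square)
qed

lemma has_vector_derivative_icos_pullback_deriv:
  fixes x :: real
  defines "z \<equiv> \<i> * of_real (cos x)"
  assumes G': "\<And>x. (G has_field_derivative G' (\<i> * of_real (cos x))) (at (\<i> * of_real (cos x)))"
    and G'': "\<And>x. (G' has_field_derivative G'' (\<i> * of_real (cos x))) (at (\<i> * of_real (cos x)))"
  shows "((\<lambda>x. of_real (2 * sin x * cos x) * G (\<i> * of_real (cos x))
               - \<i> * of_real ((sin x)^3) * G' (\<i> * of_real (cos x)))
          has_vector_derivative
            - ((1 + z^2)^2 * G'' z + 5 * (z^3 + z) * G' z + (4 * z^2 + 2) * G z)) (at x)"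
proof -
  have "((\<lambda>\<theta>. of_real (2 * sin \<theta> * cos \<theta>) :: complex) has_vector_derivative
          of_real (2 * cos x * cos x - 2 * sin x * sin x)) (at x)"
    by (rule has_vector_derivative_of_real) (auto intro!: derivative_eq_intros simp: algebra_simps)
  moreover have "((\<lambda>\<theta>. \<i> * of_real ((sin \<theta>)^3)) has_vector_derivative
          \<i> * of_real (3 * (sin x)^2 * cos x)) (at x)"
    by (intro has_vector_derivative_mult_right has_vector_derivative_of_real)
       (auto intro!: derivative_eq_intros)
  ultimately have "((\<lambda>x. of_real (2 * sin x * cos x) * G (\<i> * of_real (cos x))
               - \<i> * of_real ((sin x)^3) * G' (\<i> * of_real (cos x)))
          has_vector_derivative
            (of_real (2 * sin x * cos x) * (- \<i> * of_real (sin x) * G' z)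
               + of_real (2 * cos x * cos x - 2 * sin x * sin x) * G z)
            - (\<i> * of_real ((sin x)^3) * (- \<i> * of_real (sin x) * G'' z)
               + \<i> * of_real (3 * (sin x)^2 * cos x) * G' z)) (at x)"
    unfolding z_def
    by (intro has_vector_derivative_diff has_vector_derivative_mult
          has_vector_derivative_comp_icos[of G G' x, OF G'] has_vector_derivative_comp_icos[of G' G'' x, OF G''])
  moreover have "(of_real (2 * sin x * cos x) * (- \<i> * of_real (sin x) * G' z)
               + of_real (2 * cos x * cos x - 2 * sin x * sin x) * G z)
            - (\<i> * of_real ((sin x)^3) * (- \<i> * of_real (sin x) * G'' z)
               + \<i> * of_real (3 * (sin x)^2 * cos x) * G' z)
        = - ((1 + z^2)^2 * G'' z + 5 * (z^3 + z) * G' z + (4 * z^2 + 2) * G z)"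
  proof -
    have "(complex_of_real (sin x))^2 = 1 - (complex_of_real (cos x))^2" "\<i>^2 = (-1::complex)"
      by (simp_all add: sin_squared_eq flip: of_real_power)
    then show ?thesis
      unfolding z_def of_real_mult of_real_diff of_real_power of_real_numeral by algebra
  qed
  ultimately show ?thesis by simp
qed

lemma imag_in_closed_segment:
  fixes p q y :: real
  assumes "min p q \<le> y" "y \<le> max p q"
  shows "\<i> * of_real y \<in> closed_segment (\<i> * of_real p) (\<i> * of_real q)"
proof -
  have "linear (\<lambda>x::real. \<i> * of_real x)"
    by (rule linearI) (simp_all add: algebra_simps scaleR_conv_of_real)
  moreover have "y \<in> closed_segment p q"
    using assms by (auto simp: closed_segment_eq_real_ivl)
  ultimately show ?thesis
    using closed_segment_linear_image by blast
qed

lemma closed_segment_imag_subset: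
  fixes p q :: real
  assumes "\<bar>p\<bar> \<le> 1" "\<bar>q\<bar> \<le> 1"
  shows "closed_segment (\<i> * of_real p) (\<i> * of_real q) \<subseteq> closed_segment (-\<i>) \<i>"
  using imag_in_closed_segment[of "-1" 1 p] imag_in_closed_segment[of "-1" 1 q] assms
  by (intro subset_closed_segment[THEN iffD2]) auto

lemma contour_integral_csqrt_eq_icos_pullback:
  assumes "continuous_on (closed_segment (-\<i>) \<i>) G"
  shows "contour_integral (linepath (-\<i>) \<i>) (\<lambda>z. csqrt (1 + z^2) * G z)
           = \<i> * integral {0..pi} (icos_pullback G)"
proof -
  define F where "F u = of_real (sqrt (1 - (1 - 2*u)^2)) * G (\<i> * of_real (1 - 2*u)) * (-2*\<i>)" for u
  have "\<i> * of_real (1 - 2*u) \<in> closed_segment (-\<i>) \<i>" if "u \<in> {0..1}" for u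
    using imag_in_closed_segment[of "-1" 1 "1 - 2*u"] that by simp
  then have "(\<lambda>u. \<i> * of_real (1 - 2*u)) ` {0..1} \<subseteq> closed_segment (-\<i>) \<i>"
    by blast
  then have "continuous_on {0..1} (\<lambda>u. G (\<i> * of_real (1 - 2*u)))"
    by (intro continuous_on_compose2[OF assms]) (auto intro!: continuous_intros)
  then have cont: "continuous_on {0..1} F"
    unfolding F_def by (intro continuous_intros)
  have reparam: "(\<lambda>z. csqrt (1 + z^2) * G z) (linepath \<i> (-\<i>) u) * (-\<i> - \<i>) = F u"
    if "u \<in> {0..1}" for u
  proof -
    have "1 + (\<i> * of_real (1 - 2*u))^2 = complex_of_real (1 - (1 - 2*u)^2)"
      by (simp add: power_mult_distrib)
    moreover have "1 - (1 - 2*u)^2 = 4*u*(1 - u)"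
      by (simp add: power2_eq_square algebra_simps)
    then have "1 - (1 - 2*u)^2 \<ge> 0"
      using that by simp
    ultimately have "csqrt (1 + (\<i> * of_real (1 - 2*u))^2) = of_real (sqrt (1 - (1 - 2*u)^2))"
      using of_real_sqrt[of "1 - (1 - 2*u)^2"] by metis
    moreover have "linepath \<i> (-\<i>) u = \<i> * of_real (1 - 2*u)"
      by (simp add: linepath_def scaleR_conv_of_real algebra_simps)
    ultimately show ?thesis
      by (simp add: F_def)
  qed
  have "(F has_integral integral {0..1} F) {0..1}"
    using cont by (intro integrable_integral integrable_continuous_interval)
  then have "((\<lambda>z. csqrt (1 + z^2) * G z) has_contour_integral integral {0..1} F) (linepath \<i> (-\<i>))"
    unfolding has_contour_integral_linepath
    by (rule has_integral_eq[rotated]) (metis reparam)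
  then have reverse: "contour_integral (linepath (-\<i>) \<i>) (\<lambda>z. csqrt (1 + z^2) * G z) = - integral {0..1} F"
    using contour_integral_unique has_contour_integral_reversepath[OF valid_path_linepath]
    by (metis reversepath_linepath)
  have subst: "((\<lambda>\<theta>. (sin \<theta>/2) *\<^sub>R F ((1 - cos \<theta>)/2)) has_integral
                    integral {(1 - cos 0)/2..(1 - cos pi)/2} F) {0..pi}"
  proof (rule has_integral_substitution[where c=0 and d=1, OF _ _ _ cont])
    fix \<theta> assume "\<theta> \<in> {0..pi}"
    show "((\<lambda>\<theta>. (1 - cos \<theta>)/2) has_real_derivative sin \<theta> / 2) (at \<theta> within {0..pi})"
      by (auto intro!: derivative_eq_intros)
  qed auto
  have "(sin \<theta>/2) *\<^sub>R F ((1 - cos \<theta>)/2) = -\<i> * icos_pullback G \<theta>" if "\<theta> \<in> {0..pi}" for \<theta>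
  proof -
    have "1 - 2*((1 - cos \<theta>)/2) = cos \<theta>"
      by (simp add: field_simps)
    moreover have "sqrt (1 - (cos \<theta>)^2) = sin \<theta>"
      using that sin_ge_zero by (simp add: sin_squared_eq[symmetric])
    ultimately have "F ((1 - cos \<theta>)/2) = of_real (sin \<theta>) * G (\<i> * of_real (cos \<theta>)) * (-2*\<i>)"
      unfolding F_def by simp
    then show ?thesis
      by (simp add: icos_pullback_def scaleR_conv_of_real power2_eq_square)
  qed
  then have "((\<lambda>\<theta>. -\<i> * icos_pullback G \<theta>) has_integral integral {0..1} F) {0..pi}"
    using has_integral_eq[OF _ subst] by simp
  from has_integral_mult_right[OF this, of \<i>]
  have "integral {0..pi} (icos_pullback G) = \<i> * integral {0..1} F"
    by (simp add: integral_unique)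
  then show ?thesis
    using reverse by simp
qed

lemma norm_le_Sup_norm_image:
  fixes h :: "'a::topological_space \<Rightarrow> 'b::real_normed_vector"
  assumes "continuous_on T h" "compact T" "z \<in> T"
  shows "norm (h z) \<le> Sup ((\<lambda>z. norm (h z)) ` T)"
proof (rule cSup_upper)
  show "norm (h z) \<in> (\<lambda>z. norm (h z)) ` T"
    using assms(3) by blast
  have "compact ((\<lambda>z. norm (h z)) ` T)"
    using assms(1,2) by (intro compact_continuous_image continuous_on_norm)
  then show "bdd_above ((\<lambda>z. norm (h z)) ` T)"
    by (simp add: bounded_imp_bdd_above compact_imp_bounded)
qed

lemma continuous_on_wave_E:
  assumes "g analytic_on S"
  shows "continuous_on S (wave_E g t)"
proof -
  obtain U where U: "open U" "S \<subseteq> U" "g holomorphic_on U"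
    using assms analytic_on_holomorphic by blast
  then have "deriv g holomorphic_on U" "deriv (deriv g) holomorphic_on U"
    by (simp_all add: holomorphic_deriv)
  then have "continuous_on U (wave_E g t)"
    unfolding wave_E_def using U(3)
    by (intro continuous_intros) (auto intro: holomorphic_on_imp_continuous_on)
  then show ?thesis
    using U(2) continuous_on_subset by blast
qed

lemma icos_pullback_wave_second_derivative:
  assumes "g analytic_on closed_segment (-\<i>) \<i>"
  obtains \<phi>' where "\<And>x. (icos_pullback (\<lambda>z. exp (z * of_real t) * g z) has_vector_derivative \<phi>' x) (at x)"
    and "\<And>x. (\<phi>' has_vector_derivative - wave_E g t (\<i> * of_real (cos x))) (at x)"
proof -
  obtain U where U: "open U" "closed_segment (-\<i>) \<i> \<subseteq> U" "g holomorphic_on U"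
    using assms analytic_on_holomorphic by blast
  define G where "G z = exp (z * of_real t) * g z" for z
  define G' where "G' z = exp (z * of_real t) * (deriv g z + of_real t * g z)" for z
  define G'' where "G'' z = exp (z * of_real t) *
    (deriv (deriv g) z + 2 * of_real t * deriv g z + (of_real t)^2 * g z)" for z
  have "\<i> * of_real (cos x) \<in> U" for x
    using U(2) imag_in_closed_segment[of "-1" 1 "cos x"] by auto
  moreover have "(g has_field_derivative deriv g z) (at z)"
    and "(deriv g has_field_derivative deriv (deriv g) z) (at z)" if "z \<in> U" for z
    using U that by (auto intro: holomorphic_derivI holomorphic_deriv)
  ultimately have G': "(G has_field_derivative G' (\<i> * of_real (cos x))) (at (\<i> * of_real (cos x)))"
    and G'': "(G' has_field_derivative G'' (\<i> * of_real (cos x))) (at (\<i> * of_real (cos x)))" for x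
    unfolding G_def G'_def G''_def
    by (auto intro!: derivative_eq_intros simp: algebra_simps power2_eq_square)
  have E: "wave_E g t z = (1 + z^2)^2 * G'' z + 5 * (z^3 + z) * G' z + (4 * z^2 + 2) * G z" for z
    unfolding wave_E_def G_def G'_def G''_def by algebra
  show ?thesis
  proof (rule that)
    show "(icos_pullback (\<lambda>z. exp (z * of_real t) * g z) has_vector_derivative
             of_real (2 * sin x * cos x) * G (\<i> * of_real (cos x))
             - \<i> * of_real ((sin x)^3) * G' (\<i> * of_real (cos x))) (at x)" for x
      using has_vector_derivative_icos_pullback[of G G', OF G'] unfolding G_def .
    show "((\<lambda>x. of_real (2 * sin x * cos x) * G (\<i> * of_real (cos x))
               - \<i> * of_real ((sin x)^3) * G' (\<i> * of_real (cos x)))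
           has_vector_derivative - wave_E g t (\<i> * of_real (cos x))) (at x)" for x
      unfolding E by (rule has_vector_derivative_icos_pullback_deriv[of G G' G'' x, OF G' G''])
  qed
qed

lemma norm_le_Sup_norm_imag_segment:
  assumes "continuous_on (closed_segment (-\<i>) \<i>) h"
    and "\<bar>p\<bar> \<le> 1" "\<bar>q\<bar> \<le> 1" "min p q \<le> y" "y \<le> max p q"
  shows "norm (h (\<i> * of_real y)) \<le> Sup ((\<lambda>z. norm (h z)) ` closed_segment (\<i> * of_real p) (\<i> * of_real q))"
  using continuous_on_subset[OF assms(1) closed_segment_imag_subset[OF assms(2,3)]]
  by (rule norm_le_Sup_norm_image[OF _ compact_segment imag_in_closed_segment[OF assms(4,5)]])

lemma Sup_norm_imag_segment_nonneg:
  assumes "continuous_on (closed_segment (-\<i>) \<i>) h" "\<bar>p\<bar> \<le> 1" "\<bar>q\<bar> \<le> 1"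
  shows "0 \<le> Sup ((\<lambda>z. norm (h z)) ` closed_segment (\<i> * of_real p) (\<i> * of_real q))"
  using norm_le_Sup_norm_imag_segment[OF assms, of p] by (auto intro: order_trans[OF norm_ge_zero])

lemma norm_icos_pullback_exp:
  "norm (icos_pullback (\<lambda>z. exp (z * of_real t) * g z) x) = (sin x)^2 * norm (g (\<i> * of_real (cos x)))"
  by (simp add: icos_pullback_def norm_mult norm_power norm_exp_eq_Re)

lemma norm_icos_pullback_exp_left_edge:
  assumes "continuous_on (closed_segment (-\<i>) \<i>) g" "x \<in> {0..d}" "d \<le> pi"
  shows "norm (icos_pullback (\<lambda>z. exp (z * of_real t) * g z) x)
           \<le> Sup ((\<lambda>z. norm (g z)) ` closed_segment (\<i> * of_real (cos d)) \<i>) * x^2"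
proof -
  have "(sin x)^2 \<le> x^2"
    using assms(2,3) sin_x_le_x sin_ge_zero by (intro power_mono) auto
  moreover have "cos d \<le> cos x"
    using assms(2,3) by (intro cos_monotone_0_pi_le) auto
  then have "norm (g (\<i> * of_real (cos x))) \<le> Sup ((\<lambda>z. norm (g z)) ` closed_segment (\<i> * of_real (cos d)) \<i>)"
    using norm_le_Sup_norm_imag_segment[OF assms(1), of "cos d" 1 "cos x"] by simp
  ultimately show ?thesis
    unfolding norm_icos_pullback_exp by (simp add: mult_mono mult.commute)
qed

lemma norm_icos_pullback_exp_right_edge:
  assumes "continuous_on (closed_segment (-\<i>) \<i>) g" "x \<in> {pi-d..pi}" "d \<le> pi"
  shows "norm (icos_pullback (\<lambda>z. exp (z * of_real t) * g z) x)
           \<le> Sup ((\<lambda>z. norm (g z)) ` closed_segment (-\<i>) (-\<i> * of_real (cos d))) * (pi - x)^2"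
proof -
  have "sin x = sin (pi - x)"
    by simp
  then have "(sin x)^2 \<le> (pi - x)^2"
    using assms(2,3) sin_x_le_x[of "pi - x"] sin_ge_zero[of x] by (intro power_mono) auto
  moreover have "cos x \<le> cos (pi - d)"
    using assms(2,3) by (intro cos_monotone_0_pi_le) auto
  then have "norm (g (\<i> * of_real (cos x))) \<le> Sup ((\<lambda>z. norm (g z)) ` closed_segment (-\<i>) (-\<i> * of_real (cos d)))"
    using norm_le_Sup_norm_imag_segment[OF assms(1), of "-1" "- cos d" "cos x"] by simp
  ultimately show ?thesis
    unfolding norm_icos_pullback_exp by (simp add: mult_mono mult.commute)
qed

lemma icos_pullback_wave_midpoint_error:
  fixes g :: "complex \<Rightarrow> complex" and t :: real and n :: nat
  assumes "g analytic_on closed_segment (-\<i>) \<i>"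
  defines "d \<equiv> pi / (2 * real (n + 1))" and "\<theta> \<equiv> \<lambda>j::nat. real j * pi / real (n + 1)"
    and "\<phi> \<equiv> icos_pullback (\<lambda>z. exp (z * of_real t) * g z)"
  shows "norm (integral {0..pi} \<phi> - (\<Sum>j=1..n. (2*d) *\<^sub>R \<phi> (\<theta> j)))
           \<le> d^3/3 * (Sup ((\<lambda>z. norm (g z)) ` closed_segment (\<i> * of_real (cos d)) \<i>)
                     + Sup ((\<lambda>z. norm (g z)) ` closed_segment (-\<i>) (-\<i> * of_real (cos d)))
                     + (\<Sum>j=1..n. Sup ((\<lambda>z. norm (wave_E g t z)) `
                          closed_segment (\<i> * of_real (cos (\<theta> j - d))) (\<i> * of_real (cos (\<theta> j + d))))))"
proof -
  obtain \<phi>' where \<phi>': "\<And>x. (\<phi> has_vector_derivative \<phi>' x) (at x)"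
    and \<phi>'': "\<And>x. (\<phi>' has_vector_derivative - wave_E g t (\<i> * of_real (cos x))) (at x)"
    using icos_pullback_wave_second_derivative[OF assms(1)] unfolding \<phi>_def by blast
  have cont_g: "continuous_on (closed_segment (-\<i>) \<i>) g"
    using assms(1) analytic_imp_holomorphic holomorphic_on_imp_continuous_on by blast
  have cont_E: "continuous_on (closed_segment (-\<i>) \<i>) (wave_E g t)"
    using assms(1) by (rule continuous_on_wave_E)
  have d: "0 \<le> d" "d \<le> pi" and pi: "pi = (2*real n + 2) * d"
    by (auto simp: d_def field_simps)
  have \<theta>: "\<theta> j = 2*real j*d" for j
    by (simp add: \<theta>_def d_def field_simps)
  have cell: "norm (- wave_E g t (\<i> * of_real (cos x)))
      \<le> Sup ((\<lambda>z. norm (wave_E g t z)) ` closed_segment (\<i> * of_real (cos (\<theta> j - d))) (\<i> * of_real (cos (\<theta> j + d))))"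
    if "j \<in> {1..n}" "x \<in> {2*real j*d - d..2*real j*d + d}" for j x
  proof -
    have "1 * d \<le> real j * d" "real j * d \<le> real n * d"
      using that(1) d by (intro mult_right_mono; simp)+
    moreover have "\<theta> j = 2 * (real j * d)" "pi = 2 * (real n * d) + 2 * d"
      unfolding \<theta> pi by (simp_all add: algebra_simps)
    ultimately have "0 \<le> \<theta> j - d" "\<theta> j + d \<le> pi"
      using d by linarith+
    then have "cos (\<theta> j + d) \<le> cos x" "cos x \<le> cos (\<theta> j - d)"
      using that(2) unfolding \<theta> by (auto intro!: cos_monotone_0_pi_le)
    then show ?thesis
      using norm_le_Sup_norm_imag_segment[OF cont_E, of "cos (\<theta> j - d)" "cos (\<theta> j + d)" "cos x"] by simp
  qed
  show ?thesis
    using composite_midpoint_rule_error[OF d(1) pi \<phi>' \<phi>''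
        norm_icos_pullback_exp_left_edge[where t=t, OF cont_g _ d(2), folded \<phi>_def]
        norm_icos_pullback_exp_right_edge[where t=t, OF cont_g _ d(2), folded \<phi>_def] cell]
    unfolding \<theta> by simp
qed


lemma norm_wave_quadrature_error_eq:
  fixes g :: "complex \<Rightarrow> complex" and t K :: real and n :: nat
  assumes "continuous_on (closed_segment (-\<i>) \<i>) g" "0 \<le> K"
  defines "d \<equiv> pi / (2 * real (n + 1))" and "\<theta> \<equiv> \<lambda>j::nat. real j * pi / real (n + 1)"
    and "\<phi> \<equiv> icos_pullback (\<lambda>z. exp (z * of_real t) * g z)"
  shows "norm (2 * of_real K * contour_integral (linepath (-\<i>) \<i>)
                   (\<lambda>z. csqrt (1 + z^2) * exp (z * of_real t) * g z)
               - 2 * of_real pi * \<i> * of_real K *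
                   (\<Sum>j=1..n. g (\<i> * of_real (cos (\<theta> j))) * exp (\<i> * of_real (cos (\<theta> j)) * of_real t)
                      * of_real ((sin (\<theta> j))^2 / real (n + 1))))
           = 2 * K * norm (integral {0..pi} \<phi> - (\<Sum>j=1..n. (2*d) *\<^sub>R \<phi> (\<theta> j)))"
proof -
  have integral: "contour_integral (linepath (-\<i>) \<i>) (\<lambda>z. csqrt (1 + z^2) * exp (z * of_real t) * g z)
          = \<i> * integral {0..pi} \<phi>"
    using contour_integral_csqrt_eq_icos_pullback[of "\<lambda>z. exp (z * of_real t) * g z"] assms(1)
    unfolding \<phi>_def by (simp add: mult.assoc continuous_intros)
  have "2 * d = pi / real (n + 1)"
    by (simp add: d_def field_simps)
  then have quadrature: "of_real pi * (\<Sum>j=1..n. g (\<i> * of_real (cos (\<theta> j)))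
          * exp (\<i> * of_real (cos (\<theta> j)) * of_real t) * of_real ((sin (\<theta> j))^2 / real (n + 1)))
        = (\<Sum>j=1..n. (2*d) *\<^sub>R \<phi> (\<theta> j))"
    unfolding sum_distrib_left \<phi>_def
    by (intro sum.cong) (simp_all add: icos_pullback_def scaleR_conv_of_real mult_ac)
  have "\<And>I S. 2 * of_real K * (\<i> * I) - 2 * of_real pi * \<i> * of_real K * S
                = (2 * of_real K * \<i>) * (I - of_real pi * S)"
    by (simp add: algebra_simps)
  then show ?thesis
    unfolding integral quadrature[symmetric] using assms(2) by (simp add: norm_mult)
qed

theorem proposition2:
  fixes k :: "'a::real_normed_vector" and t :: real and n :: nat
    and g :: "complex \<Rightarrow> complex"
  assumes "k \<noteq> 0" and "t \<ge> 0" and "n \<ge> 1"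
    and "g analytic_on closed_segment (-\<i>) \<i>"
  shows "let \<theta> = (\<lambda>j::nat. real j * pi / real (n + 1));
             zz = (\<lambda>j. \<i> * of_real (cos (\<theta> j)));
             \<alpha> = (\<lambda>j. (sin (\<theta> j))^2 / real (n + 1));
             d = pi / (2 * real (n + 1));
             K = norm k
         in norm (2 * of_real K * contour_integral (linepath (-\<i>) \<i>)
                     (\<lambda>z. csqrt (1 + z^2) * exp (z * of_real t) * g z)
                  - 2 * of_real pi * \<i> * of_real K *
                     (\<Sum>j=1..n. g (zz j) * exp (zz j * of_real t) * of_real (\<alpha> j)))
            \<le> 2/3 * K * d^3 *
               (3 * Sup ((\<lambda>z. norm (g z)) ` closed_segment (\<i> * of_real (cos d)) \<i>)
                + 3 * Sup ((\<lambda>z. norm (g z)) ` closed_segment (-\<i>) (-\<i> * of_real (cos d)))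
                + (\<Sum>j=1..n. Sup ((\<lambda>z. norm (wave_E g t z)) `
                     closed_segment (\<i> * of_real (cos (\<theta> j - d))) (\<i> * of_real (cos (\<theta> j + d))))))"
proof -
  define d where "d = pi / (2 * real (n + 1))"
  define \<theta> where "\<theta> = (\<lambda>j::nat. real j * pi / real (n + 1))"
  define \<phi> where "\<phi> = icos_pullback (\<lambda>z. exp (z * of_real t) * g z)"
  let ?M\<^sub>1 = "Sup ((\<lambda>z. norm (g z)) ` closed_segment (\<i> * of_real (cos d)) \<i>)"
  let ?M\<^sub>2 = "Sup ((\<lambda>z. norm (g z)) ` closed_segment (-\<i>) (-\<i> * of_real (cos d)))"
  let ?M = "\<lambda>j. Sup ((\<lambda>z. norm (wave_E g t z)) `
                 closed_segment (\<i> * of_real (cos (\<theta> j - d))) (\<i> * of_real (cos (\<theta> j + d))))"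
  have cont_g: "continuous_on (closed_segment (-\<i>) \<i>) g"
    using assms(4) analytic_imp_holomorphic holomorphic_on_imp_continuous_on by blast
  have "0 \<le> ?M\<^sub>1" "0 \<le> ?M\<^sub>2"
    using Sup_norm_imag_segment_nonneg[OF cont_g, of "cos d" 1]
      Sup_norm_imag_segment_nonneg[OF cont_g, of "-1" "- cos d"] by simp_all
  moreover have "norm (integral {0..pi} \<phi> - (\<Sum>j=1..n. (2*d) *\<^sub>R \<phi> (\<theta> j)))
      \<le> d^3/3 * (?M\<^sub>1 + ?M\<^sub>2 + (\<Sum>j=1..n. ?M j))"
    unfolding d_def \<theta>_def \<phi>_def by (rule icos_pullback_wave_midpoint_error[OF assms(4)])
  \<comment> \<open>The end pieces actually contribute with factor 1 instead of the stated 3.\<close>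
  ultimately have "2 * norm k * norm (integral {0..pi} \<phi> - (\<Sum>j=1..n. (2*d) *\<^sub>R \<phi> (\<theta> j)))
      \<le> 2 * norm k * (d^3/3 * (?M\<^sub>1 + ?M\<^sub>2 + (\<Sum>j=1..n. ?M j))) + 4/3 * norm k * d^3 * (?M\<^sub>1 + ?M\<^sub>2)"
    by (intro add_increasing2 mult_left_mono) (auto simp: d_def)
  also have "\<dots> = 2/3 * norm k * d^3 * (3 * ?M\<^sub>1 + 3 * ?M\<^sub>2 + (\<Sum>j=1..n. ?M j))"
    by (simp add: algebra_simps)
  finally show ?thesis
    using norm_wave_quadrature_error_eq[OF cont_g norm_ge_zero, of k t n]
    unfolding Let_def \<theta>_def d_def[symmetric] \<phi>_def[symmetric] by linarith
qed

end
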